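(* Let $\mathbb{R} = A \cup B$ be a partition of $\mathbb{R}$ into two disjoint sets $A$ and $B$, each viewed as a suborder of $(\mathbb{R},<)$. Then there is an open interval $I = (a,b)$, with $-\infty \le a < b \le \infty$, such that $A \cap I$ is not order-isomorphic to $B \cap I$. Equivalently, $\mathbb{R}$ cannot be partitioned into two everywhere isomorphic sets.
   Context: Two disjoint sets $A, B \subseteq \mathbb{R}$ are called everywhere isomorphic if for every open interval $I=(a,b)$ with $-\infty\le a<b\le\infty$ (so $a=-\infty$, $b=\infty$ are allowed), the suborders $A\cap I$ and $B\cap I$ of $(\mathbb{R},<)$ are order-isomorphic. *)

theory Defs
  imports "HOL-Analysis.Analysis"
begin

definition order_isomorphic :: "real set \<Rightarrow> real set \<Rightarrow> bool" where
  "order_isomorphic S T \<longleftrightarrow>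
     (\<exists>f. bij_betw f S T \<and> (\<forall>x\<in>S. \<forall>y\<in>S. x < y \<longrightarrow> f x < f y))"

definition open_interval_ext :: "ereal \<Rightarrow> ereal \<Rightarrow> real set" where
  "open_interval_ext a b = {x. a < ereal x \<and> ereal x < b}"

definition everywhere_isomorphic :: "real set \<Rightarrow> real set \<Rightarrow> bool" where
  "everywhere_isomorphic A B \<longleftrightarrow> A \<inter> B = {} \<and>
     (\<forall>a b. a < b \<longrightarrow>
        order_isomorphic (A \<inter> open_interval_ext a b) (B \<inter> open_interval_ext a b))"

end

theory Submission
  imports Defs
begin

text \<open>Suppose A and B were everywhere isomorphic. Both are then dense, and every order isomorphism
  between A \<inter> I and B \<inter> I on an open interval I extends, by filling the cuts with suprema, to an
  order automorphism of I that interchanges A \<inter> I and B \<inter> I. Such an automorphism has no fixed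
  point, so it moves every point in the same direction, and by passing to its inverse that
  direction can be chosen freely. Take a global swap F moving points down and a swap k of
  J = (F (F 0) - 1, 0) moving points up. The square \<mu> = k \<circ> k preserves A \<inter> J and B \<inter> J and pushes
  every orbit to the top of J, so some iterate satisfies F 0 \<le> \<mu>^n (F (F 0)). The monotone map
  \<mu>^n \<circ> F on [F 0, 0] then has a fixed point, which is impossible since F interchanges A and B
  while \<mu>^n preserves them.\<close>

definition order_dense_in :: "real set \<Rightarrow> real set \<Rightarrow> bool" where
  "order_dense_in P I \<longleftrightarrow> (\<forall>a\<in>I. \<forall>b\<in>I. a < b \<longrightarrow> (\<exists>p\<in>P. a < p \<and> p < b))"

definition order_swap :: "real set \<Rightarrow> real set \<Rightarrow> (real \<Rightarrow> real) \<Rightarrow> bool" where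
  "order_swap P Q F \<longleftrightarrow> strict_mono_on (P \<union> Q) F \<and> F ` P = Q \<and> F ` Q = P"

lemma order_isomorphic_iff_strict_mono_on:
  "order_isomorphic S T \<longleftrightarrow> (\<exists>f. bij_betw f S T \<and> strict_mono_on S f)"
  by (auto simp: order_isomorphic_def strict_mono_on_def)

lemma order_isomorphic_empty_iff:
  "order_isomorphic S T \<Longrightarrow> S = {} \<longleftrightarrow> T = {}"
  by (auto simp: order_isomorphic_def bij_betw_def)

lemma order_dense_if_locally_isomorphic:
  assumes AB: "A \<union> B = UNIV"
    and iso: "\<And>a b. a < b \<Longrightarrow> order_isomorphic (A \<inter> {a<..<b}) (B \<inter> {a<..<b})"
  shows "order_dense_in A UNIV" and "order_dense_in B UNIV"
proof -
  have "A \<inter> {a<..<b} \<noteq> {} \<and> B \<inter> {a<..<b} \<noteq> {}" if "a < b" for a b :: real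
  proof -
    have "(a + b) / 2 \<in> (A \<inter> {a<..<b}) \<union> (B \<inter> {a<..<b})" using AB that by auto
    then show ?thesis using order_isomorphic_empty_iff[OF iso[OF that]] by auto
  qed
  then show "order_dense_in A UNIV" "order_dense_in B UNIV"
    unfolding order_dense_in_def by (meson disjoint_iff greaterThanLessThan_iff UNIV_I)+
qed

lemma order_dense_in_Int_interval:
  assumes "order_dense_in P UNIV" "is_interval I"
  shows "order_dense_in (P \<inter> I) I"
  unfolding order_dense_in_def
proof (intro ballI impI)
  fix a b assume ab: "a \<in> I" "b \<in> I" "a < b"
  then obtain p where "p \<in> P" "a < p" "p < b"
    using assms(1) by (auto simp: order_dense_in_def)
  with ab assms(2) show "\<exists>p\<in>P \<inter> I. a < p \<and> p < b"
    unfolding is_interval_1 by (meson IntI less_imp_le)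
qed

lemma open_real_no_min_max:
  fixes x :: real
  assumes "open S" "x \<in> S"
  shows "\<exists>a\<in>S. a < x" and "\<exists>b\<in>S. x < b"
proof -
  obtain a where "a < x" "{a<..x} \<subseteq> S"
    using open_left[OF assms, of "x - 1"] by auto
  with dense[OF \<open>a < x\<close>] show "\<exists>a\<in>S. a < x" by force
  obtain b where "x < b" "{x..<b} \<subseteq> S"
    using open_right[OF assms, of "x + 1"] by auto
  with dense[OF \<open>x < b\<close>] show "\<exists>b\<in>S. x < b" by force
qed

lemma mono_on_fixpoint:
  fixes \<phi> :: "'a::conditionally_complete_linorder \<Rightarrow> 'a"
  assumes "p \<le> q" "p \<le> \<phi> p" "\<phi> q \<le> q" and mono: "mono_on {p..q} \<phi>"
  shows "\<exists>y\<in>{p..q}. \<phi> y = y"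
proof -
  define X where "X = {x \<in> {p..q}. x \<le> \<phi> x}"
  define y where "y = Sup X"
  have "p \<in> X" using assms by (simp add: X_def)
  have bdd: "bdd_above X" unfolding X_def by (rule bdd_aboveI[of _ q]) auto
  have ub: "x \<le> y" if "x \<in> X" for x unfolding y_def using that bdd by (rule cSup_upper)
  have y: "y \<in> {p..q}"
    using ub[OF \<open>p \<in> X\<close>] \<open>p \<in> X\<close> unfolding y_def by (auto intro!: cSup_least simp: X_def)
  have "x \<le> \<phi> y" if "x \<in> X" for x
    using that mono_onD[OF mono, of x y] y ub[OF that] by (fastforce simp: X_def)
  then have "y \<le> \<phi> y"
    unfolding y_def using \<open>p \<in> X\<close> by (intro cSup_least) auto
  moreover have "\<phi> y \<le> q" using mono_onD[OF mono, of y q] y assms(1,3) by auto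
  ultimately have "\<phi> y \<in> X"
    using mono_onD[OF mono, of y "\<phi> y"] y by (auto simp: X_def)
  then have "\<phi> y \<le> y" by (rule ub)
  with \<open>y \<le> \<phi> y\<close> y show ?thesis by (metis order_antisym)
qed

lemma strict_mono_on_inv_into:
  fixes h :: "'a::linorder \<Rightarrow> 'b::linorder"
  assumes "strict_mono_on I h"
  shows "strict_mono_on (h ` I) (inv_into I h)"
proof (rule strict_mono_onI)
  fix u v assume "u \<in> h ` I" "v \<in> h ` I" "u < v"
  then obtain x y where "x \<in> I" "y \<in> I" "u = h x" "v = h y" "h x < h y" by auto
  moreover have "inj_on h I" using assms by (rule strict_mono_on_imp_inj_on)
  ultimately show "inv_into I h u < inv_into I h v"
    using strict_mono_on_less[OF assms] by simp
qed

lemma funpow_image_subset: "f ` S \<subseteq> S \<Longrightarrow> (f ^^ n) ` S \<subseteq> S"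
  by (induction n) auto

lemma strict_mono_on_funpow:
  assumes "strict_mono_on S f" "f ` S \<subseteq> S"
  shows "strict_mono_on S (f ^^ n)"
proof (induction n)
  case 0 show ?case by (simp add: strict_mono_on_ident)
next
  case (Suc n) show ?case
    unfolding funpow.simps using monotone_on_o[OF assms(1) Suc funpow_image_subset[OF assms(2)]] .
qed

lemma strict_mono_on_id_on_dense:
  fixes h :: "real \<Rightarrow> real"
  assumes h: "strict_mono_on I h" "h ` I \<subseteq> I"
    and P: "P \<subseteq> I" "order_dense_in P I" "\<forall>p\<in>P. h p = p" and x: "x \<in> I"
  shows "h x = x"
proof (rule ccontr)
  assume "h x \<noteq> x"
  then consider "h x < x" | "x < h x" by linarith
  then show False
  proof cases
    case 1
    with P x h(2) obtain p where "p \<in> P" "h x < p" "p < x" by (force simp: order_dense_in_def)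
    with P x strict_mono_onD[OF h(1), of p x] show False by auto
  next
    case 2
    with P x h(2) obtain p where "p \<in> P" "x < p" "p < h x" by (force simp: order_dense_in_def)
    with P x strict_mono_onD[OF h(1), of x p] show False by auto
  qed
qed

lemma order_swap_image:
  "order_swap P Q F \<Longrightarrow> F ` (P \<union> Q) = P \<union> Q"
  by (auto simp: order_swap_def)

lemma order_swap_fixpoint_free:
  assumes "order_swap P Q F" "P \<inter> Q = {}" "x \<in> P \<union> Q"
  shows "F x \<noteq> x"
proof -
  have "x \<in> P \<Longrightarrow> F x \<in> Q" "x \<in> Q \<Longrightarrow> F x \<in> P"
    using assms(1) by (auto simp: order_swap_def)
  with assms(2,3) show ?thesis by auto
qed

lemma order_swap_inv_into:
  assumes "order_swap P Q F"
  shows "order_swap P Q (inv_into (P \<union> Q) F)"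
proof -
  have mono: "strict_mono_on (P \<union> Q) F" and images: "F ` P = Q" "F ` Q = P"
    using assms by (auto simp: order_swap_def)
  have "inj_on F (P \<union> Q)" using mono by (rule strict_mono_on_imp_inj_on)
  then have "inv_into (P \<union> Q) F ` F ` Q = Q" "inv_into (P \<union> Q) F ` F ` P = P"
    by (auto intro: inv_into_image_cancel)
  with images strict_mono_on_inv_into[OF mono] order_swap_image[OF assms] show ?thesis
    by (simp add: order_swap_def)
qed

lemma order_swap_twice:
  assumes "order_swap P Q F"
  shows "strict_mono_on (P \<union> Q) (F \<circ> F)" "(F \<circ> F) ` P = P" "(F \<circ> F) ` Q = Q"
proof -
  have F: "strict_mono_on (P \<union> Q) F" "F ` P = Q" "F ` Q = P"
    using assms by (auto simp: order_swap_def)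
  then show "(F \<circ> F) ` P = P" "(F \<circ> F) ` Q = Q" unfolding image_comp[symmetric] by simp_all
  show "strict_mono_on (P \<union> Q) (F \<circ> F)"
    using monotone_on_o[OF F(1) F(1)] order_swap_image[OF assms] by simp
qed

lemma strict_mono_on_fixpoint_between:
  fixes h :: "real \<Rightarrow> real"
  assumes I: "is_interval I" and h: "strict_mono_on I h"
    and pq: "p \<in> I" "q \<in> I" "p \<le> q" "p < h p" "h q < q"
  shows "\<exists>y\<in>I. h y = y"
proof -
  have sub: "{p..q} \<subseteq> I" using I pq(1,2) unfolding is_interval_1 by (meson atLeastAtMost_iff subsetI)
  have "mono_on {p..q} h"
    using mono_on_subset[OF strict_mono_on_imp_mono_on[OF h] sub] .
  with pq(3-5) obtain y where "y \<in> {p..q}" "h y = y"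
    using mono_on_fixpoint[of p q h] less_imp_le by blast
  with sub show ?thesis by auto
qed

lemma fixpoint_free_automorphism_sign:
  fixes h :: "real \<Rightarrow> real"
  assumes I: "is_interval I" and h: "strict_mono_on I h" "h ` I = I"
    and free: "\<forall>y\<in>I. h y \<noteq> y"
  shows "(\<forall>y\<in>I. y < h y) \<or> (\<forall>y\<in>I. h y < y)"
proof (rule ccontr)
  assume "\<not> ?thesis"
  then obtain p q where p: "p \<in> I" "h p < p" and q: "q \<in> I" "q < h q"
    using free by (metis linorder_neq_iff)
  then consider "q < p" | "p < q" by fastforce
  then show False
  proof cases
    case 1
    with strict_mono_on_fixpoint_between[OF I h(1) q(1) p(1)] p q free show False by auto
  next
    case 2
    \<comment> \<open>Here the graph of h crosses the diagonal downwards; that of its inverse crosses it upwards.\<close>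
    define k where "k = inv_into I h"
    have k: "strict_mono_on I k" using strict_mono_on_inv_into[OF h(1)] h(2) by (simp add: k_def)
    have kh: "k (h x) = x" if "x \<in> I" for x
      using strict_mono_on_imp_inj_on[OF h(1)] that by (simp add: k_def)
    have hpq: "h p \<in> I" "h q \<in> I" "h p < h q" using h p q 2 by (auto dest: strict_mono_onD)
    moreover have "h p < k (h p)" "k (h q) < h q" using kh p q by simp_all
    ultimately obtain y where "y \<in> I" "k y = y"
      using strict_mono_on_fixpoint_between[OF I k] less_imp_le by blast
    with h(2) have "h y = y" by (metis f_inv_into_f k_def)
    with \<open>y \<in> I\<close> free show False by auto
  qed
qed

lemma order_swap_directed:
  assumes I: "is_interval (P \<union> Q)" and disj: "P \<inter> Q = {}" and F: "order_swap P Q F"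
  shows "\<exists>G. order_swap P Q G \<and> (\<forall>y\<in>P \<union> Q. G y < y)"
    and "\<exists>G. order_swap P Q G \<and> (\<forall>y\<in>P \<union> Q. y < G y)"
proof -
  define F' where "F' = inv_into (P \<union> Q) F"
  have F': "order_swap P Q F'" unfolding F'_def using F by (rule order_swap_inv_into)
  have F'_mem: "F' y \<in> P \<union> Q" and FF': "F (F' y) = y" if "y \<in> P \<union> Q" for y
    using that order_swap_image[OF F] unfolding F'_def by (metis inv_into_into, metis f_inv_into_f)
  have F'_down: "\<forall>y\<in>P \<union> Q. F' y < y" if "\<forall>y\<in>P \<union> Q. y < F y"
  proof
    fix y assume "y \<in> P \<union> Q"
    with that F'_mem have "F' y < F (F' y)" by blast
    with FF'[OF \<open>y \<in> P \<union> Q\<close>] show "F' y < y" by simp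
  qed
  have F'_up: "\<forall>y\<in>P \<union> Q. y < F' y" if "\<forall>y\<in>P \<union> Q. F y < y"
  proof
    fix y assume "y \<in> P \<union> Q"
    with that F'_mem have "F (F' y) < F' y" by blast
    with FF'[OF \<open>y \<in> P \<union> Q\<close>] show "y < F' y" by simp
  qed
  have "(\<forall>y\<in>P \<union> Q. y < F y) \<or> (\<forall>y\<in>P \<union> Q. F y < y)"
    using fixpoint_free_automorphism_sign[OF I _ order_swap_image[OF F]]
      F order_swap_fixpoint_free[OF F disj] by (simp add: order_swap_def)
  then show "\<exists>G. order_swap P Q G \<and> (\<forall>y\<in>P \<union> Q. G y < y)"
    and "\<exists>G. order_swap P Q G \<and> (\<forall>y\<in>P \<union> Q. y < G y)"
    using F F' F'_down F'_up by auto
qed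

lemma Sup_image_lower_cut:
  fixes g :: "real \<Rightarrow> real"
  assumes I: "P \<union> Q = I" "open I" "is_interval I" and disj: "P \<inter> Q = {}"
    and dense: "order_dense_in P I" and g: "bij_betw g P Q" "strict_mono_on P g"
    and x: "x \<in> Q"
  defines "s \<equiv> Sup (g ` {p \<in> P. p < x})"
  shows "s \<in> P" and "\<And>p. p \<in> P \<Longrightarrow> p < x \<Longrightarrow> g p < s" and "\<And>p. p \<in> P \<Longrightarrow> x < p \<Longrightarrow> s < g p"
proof -
  have xI: "x \<in> I" using x I by auto
  have between: "\<exists>p\<in>P. a < p \<and> p < b" if "a \<in> I" "b \<in> I" "a < b" for a b
    using dense that by (auto simp: order_dense_in_def)
  obtain a b where ab: "a \<in> I" "a < x" "b \<in> I" "x < b"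
    using open_real_no_min_max[OF I(2) xI] by blast
  obtain p0 where p0: "p0 \<in> P" "p0 < x" using between[OF ab(1) xI ab(2)] by blast
  obtain p1 where p1: "p1 \<in> P" "x < p1" using between[OF xI ab(3,4)] by blast
  have gQ: "g p \<in> Q" if "p \<in> P" for p using g(1) that by (auto simp: bij_betw_def)
  have bdd: "bdd_above (g ` {p \<in> P. p < x})"
    using p1 strict_mono_onD[OF g(2)] by (intro bdd_aboveI[of _ "g p1"]) force
  have le_s: "g p \<le> s" if "p \<in> P" "p < x" for p
    unfolding s_def using that bdd by (intro cSup_upper) auto
  have s_le: "s \<le> g p" if "p \<in> P" "x < p" for p
    unfolding s_def using p0 that strict_mono_onD[OF g(2)]
    by (intro cSup_least) (auto intro: less_imp_le)
  have "g p0 \<in> I" "g p1 \<in> I" using gQ p0 p1 I(1) by auto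
  with le_s[OF p0] s_le[OF p1] have "s \<in> I"
    using I(3) unfolding is_interval_1 by blast
  moreover have "s \<notin> Q"
  proof
    assume "s \<in> Q"
    then obtain s0 where s0: "s0 \<in> P" "s = g s0" using g(1) by (auto simp: bij_betw_def)
    have "s0 \<in> I" "s0 \<noteq> x" using s0 x I disj by auto
    then consider "s0 < x" | "x < s0" by linarith
    then show False
    proof cases
      case 1
      with between[OF \<open>s0 \<in> I\<close> xI] obtain p where "p \<in> P" "s0 < p" "p < x" by blast
      with le_s strict_mono_onD[OF g(2) s0(1)] s0(2) show False by fastforce
    next
      case 2
      with between[OF xI \<open>s0 \<in> I\<close>] obtain p where "p \<in> P" "x < p" "p < s0" by blast
      with s_le strict_mono_onD[OF g(2) _ s0(1)] s0(2) show False by fastforce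
    qed
  qed
  ultimately show sP: "s \<in> P" using I(1) by auto
  have "g p \<noteq> s" if "p \<in> P" for p using gQ[OF that] sP disj by auto
  with le_s s_le show "\<And>p. p \<in> P \<Longrightarrow> p < x \<Longrightarrow> g p < s" "\<And>p. p \<in> P \<Longrightarrow> x < p \<Longrightarrow> s < g p"
    by (auto simp: order.strict_iff_order)
qed

definition cut_extension :: "real set \<Rightarrow> (real \<Rightarrow> real) \<Rightarrow> real \<Rightarrow> real" where
  "cut_extension P g x = (if x \<in> P then g x else Sup (g ` {p \<in> P. p < x}))"

lemma cut_extension_order_embedding:
  assumes I: "P \<union> Q = I" "open I" "is_interval I" and disj: "P \<inter> Q = {}"
    and dense: "order_dense_in P I" and g: "bij_betw g P Q" "strict_mono_on P g"
  shows "strict_mono_on I (cut_extension P g)" and "cut_extension P g ` P = Q"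
    and "cut_extension P g ` Q \<subseteq> P"
proof -
  let ?F = "cut_extension P g"
  note cut = Sup_image_lower_cut[OF I disj dense g]
  have onP: "?F x = g x" if "x \<in> P" for x using that by (simp add: cut_extension_def)
  have onQ: "?F x = Sup (g ` {p \<in> P. p < x})" if "x \<in> Q" for x
    using that disj by (auto simp: cut_extension_def)
  have PQ: "?F a < ?F b" if "a \<in> P" "b \<in> Q" "a < b" for a b
    using cut(2)[OF that(2,1,3)] onP[OF that(1)] onQ[OF that(2)] by simp
  have QP: "?F a < ?F b" if "a \<in> Q" "b \<in> P" "a < b" for a b
    using cut(3)[OF that(1,2,3)] onP[OF that(2)] onQ[OF that(1)] by simp
  show "strict_mono_on I ?F"
  proof (rule strict_mono_onI)
    fix a b assume ab: "a \<in> I" "b \<in> I" "a < b"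
    consider "a \<in> P" "b \<in> P" | "a \<in> P" "b \<in> Q" | "a \<in> Q" "b \<in> P" | "a \<in> Q" "b \<in> Q"
      using ab I(1) by auto
    then show "?F a < ?F b"
    proof cases
      case 1 with ab onP strict_mono_onD[OF g(2)] show ?thesis by simp
    next
      case 2 with ab PQ show ?thesis by simp
    next
      case 3 with ab QP show ?thesis by simp
    next
      case 4
      with ab dense obtain p where "p \<in> P" "a < p" "p < b" by (auto simp: order_dense_in_def)
      with 4 QP PQ show ?thesis by (meson less_trans)
    qed
  qed
  show "?F ` P = Q" using g(1) onP by (simp add: bij_betw_def)
  show "?F ` Q \<subseteq> P" using cut(1) onQ by auto
qed

lemma order_swap_extension:
  assumes I: "P \<union> Q = I" "open I" "is_interval I" and disj: "P \<inter> Q = {}"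
    and dense: "order_dense_in P I" "order_dense_in Q I"
    and g: "bij_betw g P Q" "strict_mono_on P g"
  shows "\<exists>F. order_swap P Q F"
proof -
  define g' where "g' = inv_into P g"
  have g': "bij_betw g' Q P" "strict_mono_on Q g'"
    using bij_betw_inv_into[OF g(1)] strict_mono_on_inv_into[OF g(2)] g(1)
    by (simp_all add: g'_def bij_betw_def)
  define F where "F = cut_extension P g"
  define G where "G = cut_extension Q g'"
  note F = cut_extension_order_embedding[OF I disj dense(1) g, folded F_def]
  have QP: "Q \<union> P = I" "Q \<inter> P = {}" using I(1) disj by auto
  note G = cut_extension_order_embedding[OF QP(1) I(2,3) QP(2) dense(2) g', folded G_def]
  have FI: "F ` I \<subseteq> I" and GI: "G ` I \<subseteq> I" using F(2,3) G(2,3) I(1) by auto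
  have "F (G q) = q" if "q \<in> Q" for q
  proof -
    have "G q = g' q" "g' q \<in> P" using that g'(1) by (auto simp: G_def cut_extension_def bij_betw_def)
    moreover have "g (g' q) = q" using that g(1) by (simp add: g'_def bij_betw_def f_inv_into_f)
    ultimately show ?thesis by (simp add: F_def cut_extension_def)
  qed
  \<comment> \<open>F \<circ> G fixes the dense set Q, hence all of I; this yields surjectivity of F onto P.\<close>
  moreover have "strict_mono_on I (F \<circ> G)" using monotone_on_o[OF F(1) G(1) GI] .
  moreover have "(F \<circ> G) ` I \<subseteq> I" unfolding image_comp[symmetric] using FI GI by blast
  ultimately have "F (G y) = y" if "y \<in> I" for y
    using strict_mono_on_id_on_dense[of I "F \<circ> G" Q y] dense(2) I(1) that by auto
  then have "P \<subseteq> F ` G ` P" using I(1) by (metis Un_upper1 image_eqI subset_iff)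
  also have "\<dots> \<subseteq> F ` Q" using G(3) by (rule image_mono)
  finally have "F ` Q = P" using F(3) by auto
  with F(1,2) I(1) show ?thesis unfolding order_swap_def by auto
qed

lemma increasing_automorphism_orbit_unbounded:
  fixes \<mu> :: "real \<Rightarrow> real"
  assumes \<mu>: "strict_mono_on {c<..<e} \<mu>" "\<mu> ` {c<..<e} = {c<..<e}" "\<forall>y\<in>{c<..<e}. y < \<mu> y"
    and z: "z \<in> {c<..<e}" and w: "w < e"
  shows "\<exists>n. w \<le> (\<mu> ^^ n) z"
proof (rule ccontr)
  assume "\<nexists>n. w \<le> (\<mu> ^^ n) z"
  then have below: "(\<mu> ^^ n) z < w" for n by (simp add: not_le)
  have orbit: "(\<mu> ^^ n) z \<in> {c<..<e}" for n
    using funpow_image_subset[of \<mu> "{c<..<e}" n] \<mu>(2) z by blast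
  define S where "S = range (\<lambda>n. (\<mu> ^^ n) z)"
  define L where "L = Sup S"
  have bdd: "bdd_above S" unfolding S_def using below by (intro bdd_aboveI[of _ w]) (auto intro: less_imp_le)
  have upper: "(\<mu> ^^ n) z \<le> L" for n unfolding L_def S_def using bdd by (intro cSup_upper) (auto simp: S_def)
  have "L \<le> w" unfolding L_def S_def using below by (intro cSup_least) (auto intro: less_imp_le)
  with upper[of 0] z w have "L \<in> {c<..<e}" by auto
  with \<mu>(2) obtain x where x: "x \<in> {c<..<e}" "\<mu> x = L" by (metis imageE)
  with \<mu>(3) have "x < L" by auto
  then obtain n where n: "x < (\<mu> ^^ n) z" using less_cSupD[of S x] by (auto simp: L_def S_def)
  then have "L < \<mu> ((\<mu> ^^ n) z)" using strict_mono_onD[OF \<mu>(1) x(1) orbit] x(2) by simp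
  with upper[of "Suc n"] show False by simp
qed

lemma no_opposite_order_swaps:
  fixes A B :: "real set" and F k :: "real \<Rightarrow> real"
  assumes AB: "A \<union> B = UNIV" "A \<inter> B = {}"
    and F: "order_swap A B F" "\<forall>y. F y < y"
    and c: "c < F (F e)"
    and k: "order_swap (A \<inter> {c<..<e}) (B \<inter> {c<..<e}) k" "\<forall>y\<in>{c<..<e}. y < k y"
  shows False
proof -
  define J where "J = {c<..<e}"
  define \<mu> where "\<mu> = k \<circ> k"
  have J: "A \<inter> J \<union> B \<inter> J = J" using AB(1) by auto
  note k_twice = order_swap_twice[OF k(1), folded J_def \<mu>_def, unfolded J]
  have \<mu>J: "\<mu> ` J = J" using k_twice(2,3) J by (metis image_Un)
  have \<mu>_up: "\<forall>y\<in>J. y < \<mu> y"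
  proof
    fix y assume "y \<in> J"
    moreover from this have "k y \<in> J" using order_swap_image[OF k(1)] J by (auto simp: J_def)
    ultimately have "y < k y" "k y < k (k y)" using k(2) unfolding J_def by blast+
    then show "y < \<mu> y" by (simp add: \<mu>_def)
  qed
  have F_mono: "strict_mono_on UNIV F" using F(1) AB(1) by (simp add: order_swap_def)
  have FeJ: "F e \<in> J" "F (F e) \<in> J" using F(2)[rule_format, of e] F(2)[rule_format, of "F e"] c
    by (auto simp: J_def)
  obtain n where n: "F e \<le> (\<mu> ^^ n) (F (F e))"
    using increasing_automorphism_orbit_unbounded[OF k_twice(1)[unfolded J_def] \<mu>J[unfolded J_def]
        \<mu>_up[unfolded J_def] FeJ(2)[unfolded J_def]] F(2) by blast
  have FJ: "F ` {F e..e} \<subseteq> J"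
    using FeJ strict_mono_on_leD[OF F_mono] by (fastforce simp: J_def)
  define \<phi> where "\<phi> = (\<mu> ^^ n) \<circ> F"
  have "strict_mono_on {F e..e} \<phi>"
    unfolding \<phi>_def using monotone_on_o[OF strict_mono_on_funpow[OF k_twice(1)] _ FJ] \<mu>J
      monotone_on_subset[OF F_mono subset_UNIV] by auto
  moreover have "\<phi> e \<le> e"
    using funpow_image_subset[of \<mu> J n] \<mu>J FeJ(1) by (force simp: \<phi>_def J_def)
  ultimately obtain y where y: "y \<in> {F e..e}" "\<phi> y = y"
    using mono_on_fixpoint[of "F e" e \<phi>] F(2) n strict_mono_on_imp_mono_on
    by (fastforce simp: \<phi>_def less_imp_le)
  have preserve: "(\<mu> ^^ n) ` (A \<inter> J) \<subseteq> A \<inter> J" "(\<mu> ^^ n) ` (B \<inter> J) \<subseteq> B \<inter> J"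
    using funpow_image_subset[of \<mu> "A \<inter> J" n] funpow_image_subset[of \<mu> "B \<inter> J" n] k_twice(2,3)
    by simp_all
  have "F y \<in> J" using FJ y(1) by auto
  moreover have "y \<in> A \<Longrightarrow> F y \<in> B" "y \<in> B \<Longrightarrow> F y \<in> A"
    using F(1) by (auto simp: order_swap_def)
  ultimately have "y \<in> A \<Longrightarrow> \<phi> y \<in> B" "y \<in> B \<Longrightarrow> \<phi> y \<in> A"
    using preserve unfolding \<phi>_def by auto
  with y(2) AB show False by auto
qed

theorem theorem1:
  fixes A B :: "real set"
  assumes "A \<union> B = UNIV" and "A \<inter> B = {}"
  shows "\<exists>a b :: ereal. a < b \<and>
           \<not> order_isomorphic (A \<inter> open_interval_ext a b) (B \<inter> open_interval_ext a b)"
proof (rule ccontr)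
  assume "\<not> ?thesis"
  then have iso: "order_isomorphic (A \<inter> open_interval_ext a b) (B \<inter> open_interval_ext a b)"
    if "a < b" for a b using that by blast
  have "open_interval_ext (ereal a) (ereal b) = {a<..<b}" for a b
    by (auto simp: open_interval_ext_def)
  then have iso_real: "order_isomorphic (A \<inter> {a<..<b}) (B \<inter> {a<..<b})" if "a < b" for a b
    using iso[of "ereal a" "ereal b"] that by simp
  have iso_UNIV: "order_isomorphic A B"
    using iso[of "-\<infinity>" "\<infinity>"] by (simp add: open_interval_ext_def)
  note dense = order_dense_if_locally_isomorphic[OF assms(1) iso_real]
  obtain F0 where "order_swap A B F0"
    using iso_UNIV order_swap_extension[OF assms(1) open_UNIV is_interval_univ assms(2) dense]
    by (auto simp: order_isomorphic_iff_strict_mono_on)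
  then obtain F where F: "order_swap A B F" "\<forall>y. F y < y"
    using order_swap_directed(1)[of A B F0] assms by auto
  define J where "J = {F (F 0) - 1 <..< 0}"
  have "F (F 0) - 1 < 0" using F(2)[rule_format, of 0] F(2)[rule_format, of "F 0"] by simp
  then obtain g where "bij_betw g (A \<inter> J) (B \<inter> J)" "strict_mono_on (A \<inter> J) g"
    using iso_real[of "F (F 0) - 1" 0] unfolding J_def order_isomorphic_iff_strict_mono_on by blast
  moreover have "A \<inter> J \<union> B \<inter> J = J" "open J" "is_interval J" using assms(1) by (auto simp: J_def)
  ultimately obtain k0 where "order_swap (A \<inter> J) (B \<inter> J) k0"
    using order_swap_extension[of "A \<inter> J" "B \<inter> J" J] assms(2)
      order_dense_in_Int_interval[OF dense(1)] order_dense_in_Int_interval[OF dense(2)] by blast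
  then obtain k where "order_swap (A \<inter> J) (B \<inter> J) k" "\<forall>y\<in>J. y < k y"
    using order_swap_directed(2)[of "A \<inter> J" "B \<inter> J" k0] \<open>A \<inter> J \<union> B \<inter> J = J\<close> \<open>is_interval J\<close>
      assms(2) by auto
  then show False
    using no_opposite_order_swaps[OF assms F, of "F (F 0) - 1" 0] by (simp add: J_def)
qed

end
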